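(* Let $A$, $B$ be lattices that satisfy Whitman's condition (W) and that are each generated by a set of join prime elements and also generated by a set of meet prime elements. Let $D$ be a lattice and $g\colon A\to D$, $h\colon B\to D$ lattice epimorphisms. If the fiber product $\{(a,b)\in A\times B: g(a)=h(b)\}$ is a finitely generated sublattice of $A\times B$, then $g$ and $h$ are bounded.
   Context: Whitman's condition (W) for a lattice: for all finite subsets $S,T$, if $\bigwedge S\le\bigvee T$ then there is $s\in S$ with $s\le\bigvee T$ or there is $t\in T$ with $\bigwedge S\le t$. An element $p$ is join prime if $p\le x\vee y$ implies $p\le x$ or $p\le y$; meet prime dually. A lattice homomorphism $g\colon A\to D$ is lower bounded if for every $d\in D$ the set $\{x\in A: g(x)\ge d\}$ is empty or has a least element; upper bounded if for every $d$ the set $\{x\in A: g(x)\le d\}$ is empty or has a greatest element; bounded if both. *)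

theory Defs
  imports Main "HOL-Library.Product_Order"
begin

text \<open>Whitman's condition (W), for finite nonempty subsets (meets/joins of
finite nonempty sets exist in any lattice).\<close>
definition whitman :: "'a::lattice itself \<Rightarrow> bool" where
  "whitman _ \<longleftrightarrow>
     (\<forall>S T :: 'a set. finite S \<and> S \<noteq> {} \<and> finite T \<and> T \<noteq> {} \<and> Inf_fin S \<le> Sup_fin T \<longrightarrow>
        (\<exists>s\<in>S. s \<le> Sup_fin T) \<or> (\<exists>t\<in>T. Inf_fin S \<le> t))"

definition join_prime :: "'a::lattice \<Rightarrow> bool" where
  "join_prime p \<longleftrightarrow> (\<forall>x y. p \<le> sup x y \<longrightarrow> p \<le> x \<or> p \<le> y)"

definition meet_prime :: "'a::lattice \<Rightarrow> bool" where
  "meet_prime p \<longleftrightarrow> (\<forall>x y. inf x y \<le> p \<longrightarrow> x \<le> p \<or> y \<le> p)"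

inductive_set lat_gen :: "'a::lattice set \<Rightarrow> 'a set" for X where
  base: "x \<in> X \<Longrightarrow> x \<in> lat_gen X"
| sup: "x \<in> lat_gen X \<Longrightarrow> y \<in> lat_gen X \<Longrightarrow> sup x y \<in> lat_gen X"
| inf: "x \<in> lat_gen X \<Longrightarrow> y \<in> lat_gen X \<Longrightarrow> inf x y \<in> lat_gen X"

definition is_sublattice :: "'a::lattice set \<Rightarrow> bool" where
  "is_sublattice S \<longleftrightarrow> (\<forall>x\<in>S. \<forall>y\<in>S. sup x y \<in> S \<and> inf x y \<in> S)"

definition lattice_hom :: "('a::lattice \<Rightarrow> 'b::lattice) \<Rightarrow> bool" where
  "lattice_hom f \<longleftrightarrow> (\<forall>x y. f (sup x y) = sup (f x) (f y) \<and> f (inf x y) = inf (f x) (f y))"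

definition lower_bounded :: "('a::lattice \<Rightarrow> 'b::lattice) \<Rightarrow> bool" where
  "lower_bounded f \<longleftrightarrow> (\<forall>d. {x. d \<le> f x} = {} \<or> (\<exists>m. m \<in> {x. d \<le> f x} \<and> (\<forall>x\<in>{x. d \<le> f x}. m \<le> x)))"

definition upper_bounded :: "('a::lattice \<Rightarrow> 'b::lattice) \<Rightarrow> bool" where
  "upper_bounded f \<longleftrightarrow> (\<forall>d. {x. f x \<le> d} = {} \<or> (\<exists>m. m \<in> {x. f x \<le> d} \<and> (\<forall>x\<in>{x. f x \<le> d}. x \<le> m)))"

definition bounded_hom :: "('a::lattice \<Rightarrow> 'b::lattice) \<Rightarrow> bool" where
  "bounded_hom f \<longleftrightarrow> lower_bounded f \<and> upper_bounded f"

end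

theory Submission
  imports Defs "HOL-Library.Dual_Ordered_Lattice"
begin

text \<open>Let \<open>X\<close> be a finite generating set of the fiber product \<open>F\<close>. For \<open>b \<in> B\<close> a least
  \<open>a\<close> with \<open>h b \<le> g a\<close> exists, by induction on a term building \<open>b\<close> from join primes.
  Joins are immediate. For \<open>b\<close> join prime, or \<open>b = b\<^sub>1 \<sqinter> b\<^sub>2\<close> with least elements
  \<open>m\<^sub>1\<close>, \<open>m\<^sub>2\<close> already found, the candidate is the meet of the first coordinates of those
  \<open>x \<in> X\<close> with \<open>b \<le> snd x\<close> (and of \<open>m\<^sub>1\<close>, \<open>m\<^sub>2\<close>). It lies below \<open>fst t\<close> for every
  \<open>t \<in> F\<close> with \<open>b \<le> snd t\<close>, by induction on a term building \<open>t\<close> from \<open>X\<close>: at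
  \<open>t = x \<squnion> y\<close>, join primality of \<open>b\<close>, or Whitman's condition applied to
  \<open>b\<^sub>1 \<sqinter> b\<^sub>2 \<le> snd x \<squnion> snd y\<close>, puts \<open>b\<close> below \<open>snd x\<close> or \<open>snd y\<close>, or some \<open>b\<^sub>i\<close>
  below \<open>snd t\<close>, whence \<open>m\<^sub>i \<le> fst t\<close>. As \<open>h\<close> is onto, \<open>g\<close> is lower bounded. Swapping the
  factors treats \<open>h\<close>, and passing to order duals (meet primes become join primes, and (W) is
  self-dual) gives upper boundedness.\<close>

lemma lattice_hom_mono: "lattice_hom f \<Longrightarrow> x \<le> y \<Longrightarrow> f x \<le> f y"
  unfolding lattice_hom_def by (metis sup.absorb_iff2)

lemma lattice_hom_le_Inf_fin:
  assumes "lattice_hom f" "finite C" "C \<noteq> {}" "\<forall>c\<in>C. d \<le> f c"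
  shows "d \<le> f (Inf_fin C)"
  using assms(2-4)
proof (induction C rule: finite_ne_induct)
  case (insert c C)
  then show ?case using assms(1) by (simp add: lattice_hom_def)
qed simp

lemma whitmanD:
  fixes S T :: "'a::lattice set"
  assumes "whitman TYPE('a)" "finite S" "S \<noteq> {}" "finite T" "T \<noteq> {}" "Inf_fin S \<le> Sup_fin T"
  shows "(\<exists>s\<in>S. s \<le> Sup_fin T) \<or> (\<exists>t\<in>T. Inf_fin S \<le> t)"
  using assms unfolding whitman_def by (elim allE[of _ S] allE[of _ T]) simp

lemma whitman_binary:
  fixes a b c d :: "'a::lattice"
  assumes "whitman TYPE('a)" and "inf a b \<le> sup c d"
  shows "a \<le> sup c d \<or> b \<le> sup c d \<or> inf a b \<le> c \<or> inf a b \<le> d"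
  using whitmanD[OF assms(1), of "{a, b}" "{c, d}"] assms(2) by auto

lemma lat_gen_image:
  assumes "\<And>x y. {f (sup x y), f (inf x y)} = {sup (f x) (f y), inf (f x) (f y)}"
  shows "lat_gen (f ` X) = f ` lat_gen X"
proof
  show "lat_gen (f ` X) \<subseteq> f ` lat_gen X"
  proof
    fix t assume "t \<in> lat_gen (f ` X)"
    then show "t \<in> f ` lat_gen X"
    proof (induction t rule: lat_gen.induct)
      case (base t)
      then show ?case by (auto intro: lat_gen.base)
    next
      case (sup u v)
      then obtain x y where "u = f x" "v = f y" "x \<in> lat_gen X" "y \<in> lat_gen X" by blast
      then show ?case using assms[of x y] by (auto intro: lat_gen.sup lat_gen.inf)
    next
      case (inf u v)
      then obtain x y where "u = f x" "v = f y" "x \<in> lat_gen X" "y \<in> lat_gen X" by blast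
      then show ?case using assms[of x y] by (auto intro: lat_gen.sup lat_gen.inf)
    qed
  qed
next
  show "f ` lat_gen X \<subseteq> lat_gen (f ` X)"
  proof
    fix t assume "t \<in> f ` lat_gen X"
    then obtain x where "x \<in> lat_gen X" "t = f x" by blast
    then show "t \<in> lat_gen (f ` X)"
    proof (induction x arbitrary: t rule: lat_gen.induct)
      case (base x)
      then show ?case by (auto intro: lat_gen.base)
    next
      case (sup x y)
      have "f (sup x y) \<in> {sup (f x) (f y), inf (f x) (f y)}" using assms[of x y] by blast
      then show ?case using sup by (auto intro: lat_gen.sup lat_gen.inf)
    next
      case (inf x y)
      have "f (inf x y) \<in> {sup (f x) (f y), inf (f x) (f y)}" using assms[of x y] by blast
      then show ?case using inf by (auto intro: lat_gen.sup lat_gen.inf)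
    qed
  qed
qed

definition least_above :: "('a::order \<Rightarrow> 'd::order) \<Rightarrow> 'd \<Rightarrow> 'a \<Rightarrow> bool" where
  "least_above f d m \<longleftrightarrow> d \<le> f m \<and> (\<forall>a. d \<le> f a \<longrightarrow> m \<le> a)"

lemma lower_boundedI: "(\<And>d. \<exists>m. least_above f d m) \<Longrightarrow> lower_bounded f"
  unfolding lower_bounded_def least_above_def by blast

lemma least_above_sup:
  assumes "lattice_hom f" "least_above f d1 m1" "least_above f d2 m2"
  shows "least_above f (sup d1 d2) (sup m1 m2)"
  using assms unfolding least_above_def lattice_hom_def by (auto intro: le_supI1 le_supI2)

definition dual_fun :: "('a \<Rightarrow> 'b) \<Rightarrow> 'a dual \<Rightarrow> 'b dual" where
  "dual_fun f = dual \<circ> f \<circ> undual"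

lemma Inf_fin_dual:
  fixes S :: "'a::lattice set"
  assumes "finite S" "S \<noteq> {}"
  shows "Inf_fin (dual ` S) = dual (Sup_fin S)"
  using assms by (induction S rule: finite_ne_induct) simp_all

lemma Sup_fin_dual:
  fixes S :: "'a::lattice set"
  assumes "finite S" "S \<noteq> {}"
  shows "Sup_fin (dual ` S) = dual (Inf_fin S)"
  using assms by (induction S rule: finite_ne_induct) simp_all

lemma whitman_dual:
  assumes "whitman TYPE('a::lattice)"
  shows "whitman TYPE('a dual)"
  unfolding whitman_def
proof (intro allI impI)
  fix S T :: "'a dual set"
  assume "finite S \<and> S \<noteq> {} \<and> finite T \<and> T \<noteq> {} \<and> Inf_fin S \<le> Sup_fin T"
  moreover define S' T' where "S' = undual ` S" and "T' = undual ` T"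
  ultimately have S': "finite S'" "S' \<noteq> {}" "S = dual ` S'"
    and T': "finite T'" "T' \<noteq> {}" "T = dual ` T'"
    and le: "Inf_fin S \<le> Sup_fin T"
    by (auto simp: image_image)
  have "Inf_fin T' \<le> Sup_fin S'"
    using le by (simp add: S' T' Inf_fin_dual Sup_fin_dual)
  then have "(\<exists>t\<in>T'. t \<le> Sup_fin S') \<or> (\<exists>s\<in>S'. Inf_fin T' \<le> s)"
    by (rule whitmanD[OF assms T'(1,2) S'(1,2)])
  then show "(\<exists>s\<in>S. s \<le> Sup_fin T) \<or> (\<exists>t\<in>T. Inf_fin S \<le> t)"
    by (auto simp: S' T' Inf_fin_dual Sup_fin_dual)
qed

lemma join_prime_dual: "meet_prime p \<Longrightarrow> join_prime (dual p)"
  unfolding meet_prime_def join_prime_def by (simp add: dual_less_eq_iff)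

lemma lattice_hom_dual_fun: "lattice_hom f \<Longrightarrow> lattice_hom (dual_fun f)"
  unfolding lattice_hom_def dual_fun_def by simp

lemma surj_dual_fun: "surj f \<Longrightarrow> surj (dual_fun f)"
  unfolding dual_fun_def by (metis comp_surj surj_dual surj_undual)

lemma lat_gen_dual: "lat_gen (dual ` P) = dual ` lat_gen P"
  by (rule lat_gen_image) auto

lemma upper_bounded_if_lower_bounded_dual:
  assumes "lower_bounded (dual_fun f)"
  shows "upper_bounded f"
  unfolding upper_bounded_def
proof
  fix d
  from assms consider "\<forall>x. \<not> dual d \<le> dual_fun f x"
    | m where "dual d \<le> dual_fun f m" "\<forall>x. dual d \<le> dual_fun f x \<longrightarrow> m \<le> x"
    unfolding lower_bounded_def by blast
  then show "{x. f x \<le> d} = {} \<or> (\<exists>m. m \<in> {x. f x \<le> d} \<and> (\<forall>x\<in>{x. f x \<le> d}. x \<le> m))"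
  proof cases
    case 1
    then have "\<not> f x \<le> d" for x
      using spec[OF 1, of "dual x"] by (simp add: dual_fun_def)
    then show ?thesis by blast
  next
    case 2
    have "f (undual m) \<le> d" using 2(1) by (simp add: dual_fun_def dual_less_eq_iff)
    moreover have "x \<le> undual m" if "f x \<le> d" for x
      using 2(2) that by (auto simp: dual_fun_def dual_less_eq_iff dest: spec[of _ "dual x"])
    ultimately show ?thesis by blast
  qed
qed

locale fiber_product =
  fixes g :: "'a::lattice \<Rightarrow> 'd::lattice" and h :: "'b::lattice \<Rightarrow> 'd"
    and X :: "('a \<times> 'b) set"
  assumes hom_g: "lattice_hom g" and surj_g: "surj g"
    and hom_h: "lattice_hom h" and surj_h: "surj h"
    and finite_X: "finite X"
    and lat_gen_X: "lat_gen X = {(a, b). g a = h b}"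
begin

lemma fiber_pair_above:
  assumes "h b \<le> g a"
  obtains t where "t \<in> lat_gen X" "fst t = a" "b \<le> snd t"
proof -
  obtain c where c: "h c = g a" using surj_h by (metis surjD)
  have "h (sup b c) = g a"
    using hom_h assms c unfolding lattice_hom_def by (simp add: sup.absorb2)
  then have "(a, sup b c) \<in> lat_gen X" using lat_gen_X by simp
  then show ?thesis using that by force
qed

lemma le_image_fst:
  assumes "t \<in> lat_gen X" "b \<le> snd t"
  shows "h b \<le> g (fst t)"
  using assms lat_gen_X lattice_hom_mono[OF hom_h] by force

lemma least_above_Inf_fin:
  assumes M: "finite M" "M \<noteq> {}" "\<forall>m\<in>M. h b \<le> g m"
    and split: "\<And>x y. x \<in> lat_gen X \<Longrightarrow> y \<in> lat_gen X \<Longrightarrow> b \<le> sup (snd x) (snd y) \<Longrightarrow>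
        b \<le> snd x \<or> b \<le> snd y \<or> (\<exists>m\<in>M. m \<le> sup (fst x) (fst y))"
  shows "least_above g (h b) (Inf_fin (M \<union> fst ` {x\<in>X. b \<le> snd x}))"
proof -
  define C where "C = M \<union> fst ` {x\<in>X. b \<le> snd x}"
  have C: "finite C" "C \<noteq> {}" using M finite_X by (auto simp: C_def)
  have below: "Inf_fin C \<le> fst t" if "t \<in> lat_gen X" "b \<le> snd t" for t
    using that
  proof (induction t rule: lat_gen.induct)
    case (base x)
    then show ?case using C(1) by (auto simp: C_def intro: Inf_fin.coboundedI)
  next
    case (sup x y)
    from split[OF sup.hyps(1,2)] sup.prems
    consider "b \<le> snd x" | "b \<le> snd y" | m where "m \<in> M" "m \<le> sup (fst x) (fst y)"
      by auto
    then show ?case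
    proof cases
      case 3
      then have "Inf_fin C \<le> m" using C(1) by (auto simp: C_def intro: Inf_fin.coboundedI)
      with 3 show ?thesis by simp
    qed (use sup.IH in \<open>auto intro: le_supI1 le_supI2\<close>)
  next
    case (inf x y)
    then show ?case by simp
  qed
  have "\<forall>c\<in>C. h b \<le> g c"
    using M(3) le_image_fst[OF lat_gen.base] by (auto simp: C_def)
  then have "h b \<le> g (Inf_fin C)" using lattice_hom_le_Inf_fin[OF hom_g C] by blast
  moreover have "Inf_fin C \<le> a" if "h b \<le> g a" for a
    using fiber_pair_above[OF that] below by metis
  ultimately show ?thesis unfolding least_above_def C_def by blast
qed

lemma least_above_join_prime:
  assumes "join_prime q"
  shows "\<exists>m. least_above g (h q) m"
proof -
  obtain a where "g a = h q" using surj_g by (metis surjD)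
  then have "least_above g (h q) (Inf_fin ({a} \<union> fst ` {x\<in>X. q \<le> snd x}))"
    using assms unfolding join_prime_def by (intro least_above_Inf_fin) auto
  then show ?thesis ..
qed

lemma least_above_inf:
  assumes W: "whitman TYPE('b)"
    and m1: "least_above g (h b1) m1" and m2: "least_above g (h b2) m2"
  shows "\<exists>m. least_above g (h (inf b1 b2)) m"
proof -
  have "least_above g (h (inf b1 b2)) (Inf_fin ({m1, m2} \<union> fst ` {x\<in>X. inf b1 b2 \<le> snd x}))"
  proof (rule least_above_Inf_fin)
    have "h (inf b1 b2) \<le> h b1" "h (inf b1 b2) \<le> h b2"
      using lattice_hom_mono[OF hom_h] by simp_all
    then show "\<forall>m\<in>{m1, m2}. h (inf b1 b2) \<le> g m"
      using m1 m2 unfolding least_above_def by (auto intro: order_trans)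
  next
    fix x y
    assume "x \<in> lat_gen X" "y \<in> lat_gen X" and le: "inf b1 b2 \<le> sup (snd x) (snd y)"
    from \<open>x \<in> lat_gen X\<close> \<open>y \<in> lat_gen X\<close> have xy: "sup x y \<in> lat_gen X"
      by (rule lat_gen.sup)
    have "m1 \<le> sup (fst x) (fst y)" if "b1 \<le> sup (snd x) (snd y)"
      using m1 le_image_fst[OF xy] that unfolding least_above_def by simp
    moreover have "m2 \<le> sup (fst x) (fst y)" if "b2 \<le> sup (snd x) (snd y)"
      using m2 le_image_fst[OF xy] that unfolding least_above_def by simp
    ultimately show "inf b1 b2 \<le> snd x \<or> inf b1 b2 \<le> snd y
        \<or> (\<exists>m\<in>{m1, m2}. m \<le> sup (fst x) (fst y))"
      using whitman_binary[OF W le] by blast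
  qed simp_all
  then show ?thesis ..
qed

lemma lower_bounded_if_join_prime_generated:
  fixes Q :: "'b set"
  assumes W: "whitman TYPE('b)"
    and Q: "\<forall>q\<in>Q. join_prime q" "lat_gen Q = UNIV"
  shows "lower_bounded g"
proof (rule lower_boundedI)
  fix d
  obtain b where d: "d = h b" using surj_h by (metis surjD)
  have "b \<in> lat_gen Q" using Q(2) by simp
  then have "\<exists>m. least_above g (h b) m"
  proof (induction b rule: lat_gen.induct)
    case (base q)
    then show ?case using Q(1) least_above_join_prime by blast
  next
    case (sup b1 b2)
    then show ?case
      using least_above_sup[OF hom_g] hom_h unfolding lattice_hom_def by metis
  next
    case (inf b1 b2)
    then show ?case using least_above_inf[OF W] by blast
  qed
  then show "\<exists>m. least_above g d m" using d by simp
qed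

end

lemma fiber_product_swap:
  assumes "fiber_product g h X"
  shows "fiber_product h g (prod.swap ` X)"
proof -
  interpret fiber_product g h X by (fact assms)
  have "lat_gen (prod.swap ` X) = prod.swap ` lat_gen X"
    by (rule lat_gen_image) (auto simp: prod.swap_def)
  then have "lat_gen (prod.swap ` X) = {(b, a). h b = g a}"
    using lat_gen_X by auto
  then show ?thesis
    by (intro fiber_product.intro hom_g surj_g hom_h surj_h finite_imageI finite_X) auto
qed

lemma fiber_product_dual:
  assumes "fiber_product g h X"
  shows "fiber_product (dual_fun g) (dual_fun h) (map_prod dual dual ` X)"
proof -
  interpret fiber_product g h X by (fact assms)
  have "lat_gen (map_prod dual dual ` X) = map_prod dual dual ` lat_gen X"
    by (rule lat_gen_image) auto
  also have "\<dots> = {(a, b). dual_fun g a = dual_fun h b}"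
  proof (intro set_eqI iffI)
    fix p
    assume "p \<in> map_prod dual dual ` lat_gen X"
    then show "p \<in> {(a, b). dual_fun g a = dual_fun h b}"
      using lat_gen_X by (auto simp: dual_fun_def)
  next
    fix p
    assume "p \<in> {(a, b). dual_fun g a = dual_fun h b}"
    then have "map_prod undual undual p \<in> lat_gen X"
      using lat_gen_X by (auto simp: dual_fun_def)
    moreover have "p = map_prod dual dual (map_prod undual undual p)"
      by (cases p) simp
    ultimately show "p \<in> map_prod dual dual ` lat_gen X" by blast
  qed
  finally show ?thesis
    by (intro fiber_product.intro lattice_hom_dual_fun surj_dual_fun finite_imageI
        hom_g surj_g hom_h surj_h finite_X)
qed

lemma (in fiber_product) bounded_hom_if_prime_generated:
  fixes J M :: "'b set"
  assumes W: "whitman TYPE('b)"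
    and J: "\<forall>q\<in>J. join_prime q" "lat_gen J = UNIV"
    and M: "\<forall>q\<in>M. meet_prime q" "lat_gen M = UNIV"
  shows "bounded_hom g"
proof -
  interpret dual: fiber_product "dual_fun g" "dual_fun h" "map_prod dual dual ` X"
    by (rule fiber_product_dual) unfold_locales
  have "lower_bounded (dual_fun g)"
  proof (rule dual.lower_bounded_if_join_prime_generated[where Q = "dual ` M"])
    show "whitman TYPE('b dual)" using W by (rule whitman_dual)
    show "\<forall>q\<in>dual ` M. join_prime q" using M(1) join_prime_dual by blast
    show "lat_gen (dual ` M) = UNIV" using M(2) surj_dual by (simp add: lat_gen_dual)
  qed
  then show ?thesis
    unfolding bounded_hom_def
    using lower_bounded_if_join_prime_generated[OF W J] upper_bounded_if_lower_bounded_dual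
    by blast
qed

theorem mainTheorem4:
  fixes g :: "'a::lattice \<Rightarrow> 'd::lattice" and h :: "'b::lattice \<Rightarrow> 'd"
  assumes WA: "whitman TYPE('a)" and WB: "whitman TYPE('b)"
    and JA: "\<exists>P::'a set. (\<forall>p\<in>P. join_prime p) \<and> lat_gen P = UNIV"
    and MA: "\<exists>P::'a set. (\<forall>p\<in>P. meet_prime p) \<and> lat_gen P = UNIV"
    and JB: "\<exists>P::'b set. (\<forall>p\<in>P. join_prime p) \<and> lat_gen P = UNIV"
    and MB: "\<exists>P::'b set. (\<forall>p\<in>P. meet_prime p) \<and> lat_gen P = UNIV"
    and g: "lattice_hom g" "surj g"
    and h: "lattice_hom h" "surj h"
    and fg: "\<exists>X. finite X \<and> X \<subseteq> {(a, b). g a = h b} \<and> lat_gen X = {(a, b). g a = h b}"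
  shows "bounded_hom g \<and> bounded_hom h"
proof -
  obtain X where "finite X" "lat_gen X = {(a, b). g a = h b}" using fg by blast
  then interpret fiber_product g h X using g h by unfold_locales
  interpret swapped: fiber_product h g "prod.swap ` X"
    by (rule fiber_product_swap) unfold_locales
  have "bounded_hom g" using WB JB MB bounded_hom_if_prime_generated by blast
  moreover have "bounded_hom h" using WA JA MA swapped.bounded_hom_if_prime_generated by blast
  ultimately show ?thesis ..
qed

end
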